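(* Let $t$ be a positive integer, $n\ge 4t^2+10t$, and let $c\ge 3$ be an integer with $n\ge (t+1)c-1$. Then $$\lambda_1\big(D(K_{2t-1}\vee(K_{n-2t}+K_1))\big)<n+2\le \lambda_1\big(D(K_{tc-1}\vee(K_{n-(t+1)c+2}+(c-1)K_1))\big).$$
   Context: For a connected graph $G$, $D(G)$ is the distance matrix and $\lambda_1(D(G))$ its largest eigenvalue. $K_m$ is the complete graph, $+$ is disjoint union, $(c-1)K_1$ is $c-1$ isolated vertices, $\vee$ is the join (disjoint union plus all edges between the two parts). *)

theory Defs
  imports "Jordan_Normal_Form.Char_Poly"
begin

text \<open>A finite simple graph on the vertex set {0..<N}, given by the number N
  of vertices and an adjacency relation (only pairs of vertices below N matter).\<close>
type_synonym graph = "nat \<times> (nat \<Rightarrow> nat \<Rightarrow> bool)"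

definition gverts :: "graph \<Rightarrow> nat" where "gverts G = fst G"
definition gadj :: "graph \<Rightarrow> nat \<Rightarrow> nat \<Rightarrow> bool" where "gadj G = snd G"

definition complete_graph :: "nat \<Rightarrow> graph" where
  "complete_graph m = (m, \<lambda>i j. i < m \<and> j < m \<and> i \<noteq> j)"

definition empty_graph :: "nat \<Rightarrow> graph" where
  "empty_graph m = (m, \<lambda>i j. False)"

definition graph_union :: "graph \<Rightarrow> graph \<Rightarrow> graph" where
  "graph_union G H = (gverts G + gverts H, \<lambda>i j.
     (i < gverts G \<and> j < gverts G \<and> gadj G i j) \<or>
     (gverts G \<le> i \<and> gverts G \<le> j \<and> i < gverts G + gverts H \<and> j < gverts G + gverts H
        \<and> gadj H (i - gverts G) (j - gverts G)))"

definition graph_join :: "graph \<Rightarrow> graph \<Rightarrow> graph" where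
  "graph_join G H = (gverts G + gverts H, \<lambda>i j.
     gadj (graph_union G H) i j \<or>
     (i < gverts G \<and> gverts G \<le> j \<and> j < gverts G + gverts H) \<or>
     (j < gverts G \<and> gverts G \<le> i \<and> i < gverts G + gverts H))"

definition has_walk :: "graph \<Rightarrow> nat \<Rightarrow> nat \<Rightarrow> nat \<Rightarrow> bool" where
  "has_walk G k u v = (\<exists>p :: nat list. length p = k + 1 \<and> p ! 0 = u \<and> p ! k = v \<and>
      (\<forall>x \<in> set p. x < gverts G) \<and> (\<forall>i < k. gadj G (p ! i) (p ! Suc i)))"

definition graph_dist :: "graph \<Rightarrow> nat \<Rightarrow> nat \<Rightarrow> nat" where
  "graph_dist G u v = (LEAST k. has_walk G k u v)"

definition dist_matrix :: "graph \<Rightarrow> real mat" where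
  "dist_matrix G = mat (gverts G) (gverts G) (\<lambda>(i, j). real (graph_dist G i j))"

definition largest_eigenvalue :: "real mat \<Rightarrow> real" where
  "largest_eigenvalue A = Max {k. eigenvalue A k}"

end

theory Submission
  imports Defs "Jordan_Normal_Form.Spectral_Radius"
begin

text \<open>Both graphs have the shape \<open>K\<^sub>P \<or> (K\<^sub>Q + H)\<close> with \<open>H\<close> edgeless, so every distance
  is 1 or 2 and depends only on which of the three parts the two vertices lie in. Hence
  vectors that are constant on the parts are mapped to such vectors, and the distance
  matrix acts on them through a \<open>3 \<times> 3\<close> quotient matrix \<open>B\<close>.
  For the first graph, the weight vector \<open>(n + 2, n + 2, 2n - 2t)\<close> satisfies
  \<open>D w < (n + 2) w\<close> entrywise, which bounds every real eigenvalue by \<open>n + 2\<close>.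
  For the second graph, \<open>det (B - \<lambda> I)\<close> is a cubic with leading coefficient \<open>-1\<close> that is
  nonnegative at \<open>\<lambda> = n + 2\<close> (a polynomial inequality in \<open>t, c\<close> and \<open>n - tc\<close>), so it has a
  root \<open>\<lambda> \<ge> n + 2\<close>, and lifting a kernel vector of \<open>B - \<lambda> I\<close> gives an eigenvector of \<open>D\<close>.\<close>

lemma has_walk_0_iff: "has_walk G 0 u v \<longleftrightarrow> u = v \<and> u < gverts G"
proof
  assume "has_walk G 0 u v"
  then obtain p where "length p = 1" "p ! 0 = u" "p ! 0 = v" "\<forall>x\<in>set p. x < gverts G"
    unfolding has_walk_def by auto
  then show "u = v \<and> u < gverts G" by (cases p) auto
next
  assume "u = v \<and> u < gverts G"
  then show "has_walk G 0 u v"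
    unfolding has_walk_def by (intro exI[of _ "[u]"]) auto
qed

lemma has_walk_1_imp_gadj: "has_walk G 1 u v \<Longrightarrow> gadj G u v"
  unfolding has_walk_def by force

lemma has_walk_1I: "u < gverts G \<Longrightarrow> v < gverts G \<Longrightarrow> gadj G u v \<Longrightarrow> has_walk G 1 u v"
  unfolding has_walk_def by (intro exI[of _ "[u, v]"]) auto

lemma has_walk_2I:
  "u < gverts G \<Longrightarrow> v < gverts G \<Longrightarrow> w < gverts G \<Longrightarrow> gadj G u w \<Longrightarrow> gadj G w v \<Longrightarrow>
    has_walk G 2 u v"
  unfolding has_walk_def
  by (intro exI[of _ "[u, w, v]"]) (auto simp: less_Suc_eq numeral_2_eq_2)

lemma graph_dist_self: "u < gverts G \<Longrightarrow> graph_dist G u u = 0"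
  unfolding graph_dist_def by (rule Least_eq_0) (simp add: has_walk_0_iff)

lemma graph_dist_eq_1:
  assumes "u \<noteq> v" "u < gverts G" "v < gverts G" "gadj G u v"
  shows "graph_dist G u v = 1"
  unfolding graph_dist_def
proof (rule Least_equality)
  show "has_walk G 1 u v" using assms by (intro has_walk_1I)
  show "1 \<le> k" if "has_walk G k u v" for k
    using that \<open>u \<noteq> v\<close> by (cases k) (auto simp: has_walk_0_iff)
qed

lemma graph_dist_eq_2:
  assumes "u \<noteq> v" "u < gverts G" "v < gverts G" "\<not> gadj G u v"
    and "w < gverts G" "gadj G u w" "gadj G w v"
  shows "graph_dist G u v = 2"
  unfolding graph_dist_def
proof (rule Least_equality)
  show "has_walk G 2 u v" using assms by (intro has_walk_2I)
  show "2 \<le> k" if walk: "has_walk G k u v" for k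
  proof (rule ccontr)
    assume "\<not> 2 \<le> k"
    then consider "k = 0" | "k = 1" by linarith
    then show False
      using walk assms(1,4) has_walk_1_imp_gadj[of G u v] by cases (auto simp: has_walk_0_iff)
  qed
qed

abbreviation clique_join :: "nat \<Rightarrow> nat \<Rightarrow> graph \<Rightarrow> graph" where
  "clique_join P Q H \<equiv> graph_join (complete_graph P) (graph_union (complete_graph Q) H)"

definition part :: "nat \<Rightarrow> nat \<Rightarrow> nat \<Rightarrow> nat" where
  "part P Q j = (if j < P then 0 else if j < P + Q then 1 else 2)"

definition part_dist :: "nat \<Rightarrow> nat \<Rightarrow> real" where
  "part_dist a b = (if a = 0 \<or> b = 0 \<or> (a = 1 \<and> b = 1) then 1 else 2)"

definition part_matrix :: "nat \<Rightarrow> nat \<Rightarrow> nat \<Rightarrow> real mat" where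
  "part_matrix P Q N =
     mat N N (\<lambda>(i, j). if i = j then 0 else part_dist (part P Q i) (part P Q j))"

lemma part_matrix_carrier: "part_matrix P Q N \<in> carrier_mat N N"
  and dim_part_matrix [simp]: "dim_row (part_matrix P Q N) = N" "dim_col (part_matrix P Q N) = N"
  by (simp_all add: part_matrix_def)

lemma part_cases: "part P Q i = 0 \<or> part P Q i = 1 \<or> part P Q i = 2"
  by (simp add: part_def)

lemma part_dist_nonneg: "part_dist a b \<ge> 0"
  by (simp add: part_dist_def)

lemma graph_dist_clique_join:
  assumes H: "\<And>i j. \<not> gadj H i j" and P: "P \<ge> 1"
    and i: "i < P + Q + gverts H" and j: "j < P + Q + gverts H"
  shows "real (graph_dist (clique_join P Q H) i j) =
           (if i = j then 0 else part_dist (part P Q i) (part P Q j))"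
proof -
  let ?G = "clique_join P Q H"
  have verts: "gverts ?G = P + Q + gverts H"
    unfolding graph_join_def graph_union_def gverts_def complete_graph_def by simp
  have adj: "gadj ?G a b \<longleftrightarrow> a \<noteq> b \<and> (a < P \<or> b < P \<or> (a < P + Q \<and> b < P + Q))"
    if "a < P + Q + gverts H" "b < P + Q + gverts H" for a b
    using that H
    unfolding graph_join_def graph_union_def gadj_def gverts_def complete_graph_def by auto
  show ?thesis
  proof (cases "i = j")
    case True
    then show ?thesis using i verts by (simp add: graph_dist_self)
  next
    case False
    show ?thesis
    proof (cases "gadj ?G i j")
      case True
      then show ?thesis
        using False i j verts adj[OF i j] by (auto simp: graph_dist_eq_1 part_dist_def part_def)
    next
      case False': False
      have "graph_dist ?G i j = 2"
        using False False' i j verts adj[OF i j] adj[of i 0] adj[of 0 j] P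
        by (intro graph_dist_eq_2[where w = 0]) auto
      then show ?thesis using False False' adj[OF i j] by (auto simp: part_dist_def part_def)
    qed
  qed
qed

lemma dist_matrix_clique_join:
  assumes "\<And>i j. \<not> gadj H i j" and "P \<ge> 1"
  shows "dist_matrix (clique_join P Q H) = part_matrix P Q (P + Q + gverts H)"
proof -
  have "gverts (clique_join P Q H) = P + Q + gverts H"
    unfolding graph_join_def graph_union_def gverts_def complete_graph_def by simp
  then show ?thesis
    unfolding dist_matrix_def part_matrix_def
    using graph_dist_clique_join[OF assms] by (intro eq_matI) auto
qed

lemma sum_part:
  fixes F :: "nat \<Rightarrow> real"
  assumes "P + Q \<le> N"
  shows "(\<Sum>j = 0..<N. F (part P Q j)) = real P * F 0 + real Q * F 1 + real (N - P - Q) * F 2"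
proof -
  have "(\<Sum>j = 0..<N. F (part P Q j)) =
      (\<Sum>j = 0..<P. F (part P Q j)) + (\<Sum>j = P..<P + Q. F (part P Q j)) +
      (\<Sum>j = P + Q..<N. F (part P Q j))"
    using assms by (simp add: sum.atLeastLessThan_concat)
  also have "\<dots> = (\<Sum>j = 0..<P. F 0) + (\<Sum>j = P..<P + Q. F 1) + (\<Sum>j = P + Q..<N. F 2)"
    by (intro arg_cong2[where f = "(+)"] sum.cong) (auto simp: part_def)
  also have "\<dots> = real P * F 0 + real Q * F 1 + real (N - P - Q) * F 2"
    using assms by (simp add: of_nat_diff)
  finally show ?thesis .
qed

lemma part_matrix_mult_vec:
  fixes x :: "nat \<Rightarrow> real"
  assumes "P + Q \<le> N" and i: "i < N"
  defines "k \<equiv> part P Q i"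
  shows "(part_matrix P Q N *\<^sub>v vec N (\<lambda>j. x (part P Q j))) $ i =
    real P * part_dist k 0 * x 0 + real Q * part_dist k 1 * x 1
      + real (N - P - Q) * part_dist k 2 * x 2 - part_dist k k * x k"
proof -
  have "(part_matrix P Q N *\<^sub>v vec N (\<lambda>j. x (part P Q j))) $ i =
      (\<Sum>j = 0..<N. part_dist k (part P Q j) * x (part P Q j) -
        (if j = i then part_dist k k * x k else 0))"
    using i unfolding part_matrix_def k_def by (auto simp: scalar_prod_def intro: sum.cong)
  also have "\<dots> = real P * part_dist k 0 * x 0 + real Q * part_dist k 1 * x 1
      + real (N - P - Q) * part_dist k 2 * x 2 - part_dist k k * x k"
    using i sum_part[OF assms(1), of "\<lambda>l. part_dist k l * x l"]
    by (simp add: sum_subtractf mult.assoc)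
  finally show ?thesis .
qed

lemma part_matrix_eigenvalue_minus_1:
  assumes "Q \<ge> 2" "P + Q \<le> N"
  shows "eigenvalue (part_matrix P Q N) (-1)"
proof -
  define v where "v = vec N (\<lambda>j. if j = P then 1 else if j = P + 1 then -1 else (0::real))"
  have P: "P + 1 < N" "part P Q P = 1" "part P Q (P + 1) = 1"
    using assms unfolding part_def by auto
  have "part_matrix P Q N *\<^sub>v v = (-1) \<cdot>\<^sub>v v"
  proof (rule eq_vecI)
    fix i assume "i < dim_vec ((-1) \<cdot>\<^sub>v v)"
    then have i: "i < N" by (simp add: v_def)
    have "(part_matrix P Q N *\<^sub>v v) $ i =
        (\<Sum>j = 0..<N. (if j = P then part_matrix P Q N $$ (i, j) else 0)
                       - (if j = P + 1 then part_matrix P Q N $$ (i, j) else 0))"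
      using i unfolding v_def by (auto simp: scalar_prod_def intro: sum.cong)
    also have "\<dots> = part_matrix P Q N $$ (i, P) - part_matrix P Q N $$ (i, P + 1)"
      using P by (simp add: sum_subtractf)
    also have "\<dots> = ((-1) \<cdot>\<^sub>v v) $ i"
      using P i by (auto simp: v_def part_matrix_def part_dist_def)
    finally show "(part_matrix P Q N *\<^sub>v v) $ i = ((-1) \<cdot>\<^sub>v v) $ i" .
  qed (simp add: part_matrix_def v_def)
  moreover have "v \<noteq> 0\<^sub>v N"
    using P by (auto simp: v_def dest: arg_cong[where f = "\<lambda>v. v $ P"])
  ultimately show ?thesis
    unfolding eigenvalue_def eigenvector_def by (intro exI[of _ v]) (simp add: v_def)
qed

lemma eigenvalue_le_largest_eigenvalue:
  assumes "A \<in> carrier_mat N N" "eigenvalue A k"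
  shows "k \<le> largest_eigenvalue A"
    and eigenvalue_largest_eigenvalue: "eigenvalue A (largest_eigenvalue A)"
proof -
  have fin: "finite {k. eigenvalue A k}"
    using card_finite_spectrum(1)[OF assms(1)] unfolding spectrum_def by simp
  show "k \<le> largest_eigenvalue A"
    unfolding largest_eigenvalue_def using fin assms(2) by (simp add: Max_ge)
  show "eigenvalue A (largest_eigenvalue A)"
    unfolding largest_eigenvalue_def using Max_in[OF fin] assms(2) by auto
qed

text \<open>Collatz--Wielandt bound: evaluate the eigen-equation at the coordinate where
  \<open>\<bar>v\<^sub>i\<bar> / w\<^sub>i\<close> is largest.\<close>

lemma eigenvalue_lt_of_mult_vec_lt:
  fixes A :: "real mat"
  assumes A: "A \<in> carrier_mat N N" and nonneg: "\<And>i j. i < N \<Longrightarrow> j < N \<Longrightarrow> A $$ (i, j) \<ge> 0"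
    and w: "w \<in> carrier_vec N" "\<And>i. i < N \<Longrightarrow> w $ i > 0"
    and lt: "\<And>i. i < N \<Longrightarrow> (A *\<^sub>v w) $ i < \<mu> * w $ i"
    and "eigenvalue A k"
  shows "k < \<mu>"
proof -
  obtain v where v: "v \<in> carrier_vec N" "v \<noteq> 0\<^sub>v N" "A *\<^sub>v v = k \<cdot>\<^sub>v v"
    using \<open>eigenvalue A k\<close> A unfolding eigenvalue_def eigenvector_def by auto
  obtain i1 where i1: "i1 < N" "v $ i1 \<noteq> 0"
    using v(1,2) by (metis carrier_vecD eq_vecI index_zero_vec(1,2))
  define r where "r i = \<bar>v $ i\<bar> / w $ i" for i
  define m where "m = Max (r ` {0..<N})"
  have "m \<in> r ` {0..<N}" unfolding m_def using i1 by (intro Max_in) auto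
  then obtain i0 where i0: "i0 < N" "m = r i0" by auto
  have r_le: "r i \<le> m" if "i < N" for i unfolding m_def using that by auto
  have "r i1 > 0" using i1 w(2)[OF i1(1)] unfolding r_def by simp
  with r_le[OF i1(1)] have "m > 0" by linarith
  have v_le: "\<bar>v $ j\<bar> \<le> m * w $ j" if "j < N" for j
    using r_le[OF that] w(2)[OF that] unfolding r_def by (simp add: divide_le_eq)
  have v_i0: "\<bar>v $ i0\<bar> = m * w $ i0" using w(2)[OF i0(1)] i0 unfolding r_def by auto
  have "\<bar>k\<bar> * \<bar>v $ i0\<bar> = \<bar>(A *\<^sub>v v) $ i0\<bar>" using v(1,3) i0 by (simp add: abs_mult)
  also have "\<dots> = \<bar>\<Sum>j = 0..<N. A $$ (i0, j) * v $ j\<bar>"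
    using A v(1) i0 by (simp add: scalar_prod_def)
  also have "\<dots> \<le> (\<Sum>j = 0..<N. A $$ (i0, j) * (m * w $ j))"
    using nonneg[OF i0(1)] v_le
    by (intro order.trans[OF sum_abs] sum_mono) (simp add: abs_mult mult_left_mono)
  also have "\<dots> = m * (A *\<^sub>v w) $ i0"
    using A w(1) i0 by (simp add: scalar_prod_def sum_distrib_left algebra_simps)
  also have "\<dots> < m * (\<mu> * w $ i0)" using lt[OF i0(1)] \<open>m > 0\<close> by simp
  also have "\<dots> = \<mu> * \<bar>v $ i0\<bar>" using v_i0 by simp
  finally have "\<bar>k\<bar> * \<bar>v $ i0\<bar> < \<mu> * \<bar>v $ i0\<bar>" .
  moreover have "\<bar>v $ i0\<bar> > 0" using v_i0 \<open>m > 0\<close> w(2)[OF i0(1)] by simp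
  ultimately show ?thesis by (simp add: mult_less_cancel_right)
qed

text \<open>\<open>quotient_poly p q r \<lambda> = det (B - \<lambda> I)\<close> for the quotient matrix
  \<open>B = [[p - 1, q, r], [p, q - 1, 2r], [p, 2q, 2r - 2]]\<close> of the three parts; the weights
  \<open>w\<^sub>1, w\<^sub>2, w\<^sub>3\<close> below form the cross product of the first two rows of \<open>B - \<lambda> I\<close>.\<close>

definition quotient_poly :: "real \<Rightarrow> real \<Rightarrow> real \<Rightarrow> real \<Rightarrow> real" where
  "quotient_poly p q r l = p * (r * (l + q + 1)) + 2 * q * (r * (2 * l - p + 2))
     + (2 * (r - 1) - l) * ((l - p + 1) * (l - q + 1) - q * p)"

lemma continuous_on_quotient_poly: "continuous_on S (quotient_poly p q r)"
  unfolding quotient_poly_def by (intro continuous_intros)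

lemma part_matrix_eigenvalue_of_root:
  assumes "P \<ge> 1" "R \<ge> 1" "l \<ge> 0"
    and root: "quotient_poly (real P) (real Q) (real R) l = 0"
  shows "eigenvalue (part_matrix P Q (P + Q + R)) l"
proof -
  define N where "N = P + Q + R"
  define p q r where "p = real P" and "q = real Q" and "r = real R"
  define w1 w2 w3 where "w1 = r * (l + q + 1)" and "w2 = r * (2 * l - p + 2)"
    and "w3 = (l - p + 1) * (l - q + 1) - q * p"
  define x where "x k = (if k = 0 then w1 else if k = 1 then w2 else w3)" for k :: nat
  define v where "v = vec N (\<lambda>j. x (part P Q j))"
  have row3: "p * w1 + 2 * q * w2 + (2 * (r - 1) - l) * w3 = 0"
    using root unfolding quotient_poly_def p_def q_def r_def w1_def w2_def w3_def by simp
  have "part_matrix P Q N *\<^sub>v v = l \<cdot>\<^sub>v v"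
  proof (rule eq_vecI)
    fix i assume "i < dim_vec (l \<cdot>\<^sub>v v)"
    then have i: "i < N" by (simp add: v_def)
    have "N - P - Q = R" by (simp add: N_def)
    then have "(part_matrix P Q N *\<^sub>v v) $ i =
        p * part_dist (part P Q i) 0 * w1 + q * part_dist (part P Q i) 1 * w2
          + r * part_dist (part P Q i) 2 * w3 - part_dist (part P Q i) (part P Q i) * x (part P Q i)"
      using part_matrix_mult_vec[of P Q N i x] i by (simp add: N_def v_def x_def p_def q_def r_def)
    also have "\<dots> = l * x (part P Q i)"
      using part_cases[of P Q i]
    proof (elim disjE)
      assume "part P Q i = 2"
      then show ?thesis using row3 by (simp add: x_def part_dist_def algebra_simps)
    qed (simp_all add: x_def w1_def w2_def w3_def part_dist_def algebra_simps)
    finally show "(part_matrix P Q N *\<^sub>v v) $ i = (l \<cdot>\<^sub>v v) $ i"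
      using i by (simp add: v_def)
  qed (simp add: v_def)
  moreover have "v $ 0 = w1" "w1 > 0"
    using assms unfolding v_def x_def w1_def r_def q_def N_def part_def by auto
  then have "v \<noteq> 0\<^sub>v N" using \<open>P \<ge> 1\<close> by (auto simp: N_def)
  ultimately show ?thesis
    unfolding eigenvalue_def eigenvector_def N_def by (intro exI[of _ v]) (simp add: v_def N_def)
qed

lemma le_largest_eigenvalue_part_matrix:
  assumes "P \<ge> 1" "R \<ge> 1" "0 \<le> \<mu>" "\<mu> \<le> \<nu>"
    and "quotient_poly (real P) (real Q) (real R) \<mu> \<ge> 0"
    and "quotient_poly (real P) (real Q) (real R) \<nu> \<le> 0"
  shows "\<mu> \<le> largest_eigenvalue (part_matrix P Q (P + Q + R))"
proof -
  obtain l where "\<mu> \<le> l" "quotient_poly (real P) (real Q) (real R) l = 0"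
    using IVT2'[OF assms(6,5,4) continuous_on_quotient_poly] by auto
  with assms(1-3) show ?thesis
    by (meson eigenvalue_le_largest_eigenvalue part_matrix_carrier
        part_matrix_eigenvalue_of_root order.trans)
qed

lemma quotient_poly_10n_nonpos:
  fixes p q r n :: real
  assumes "p \<ge> 0" "q \<ge> 0" "r \<ge> 0" "p + q + r = n" "n \<ge> 1"
  shows "quotient_poly p q r (10 * n) \<le> 0"
proof -
  define l where "l = 10 * n"
  have "(l - p + 1) * (l - q + 1) \<ge> (9 * n) * (9 * n)"
    by (rule mult_mono) (use assms in \<open>auto simp: l_def\<close>)
  moreover have "q * p \<le> n * n" by (rule mult_mono) (use assms in auto)
  ultimately have W: "(l - p + 1) * (l - q + 1) - q * p \<ge> 80 * n * n"
    by (simp add: algebra_simps)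
  have neg: "(l - 2 * (r - 1)) * ((l - p + 1) * (l - q + 1) - q * p) \<ge> (8 * n) * (80 * n * n)"
    by (rule mult_mono) (use assms W in \<open>auto simp: l_def\<close>)
  have "r * (l + q + 1) \<le> n * (12 * n)"
    by (rule mult_mono) (use assms in \<open>auto simp: l_def\<close>)
  then have pos1: "p * (r * (l + q + 1)) \<le> n * (n * (12 * n))"
    by (rule mult_mono[rotated]) (use assms in \<open>auto simp: l_def\<close>)
  have "r * (2 * l - p + 2) \<le> n * (22 * n)"
    by (rule mult_mono) (use assms in \<open>auto simp: l_def\<close>)
  then have pos2: "q * (r * (2 * l - p + 2)) \<le> n * (n * (22 * n))"
    by (rule mult_mono[rotated]) (use assms in \<open>auto simp: l_def\<close>)
  have "quotient_poly p q r l = p * (r * (l + q + 1)) + 2 * (q * (r * (2 * l - p + 2)))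
      - (l - 2 * (r - 1)) * ((l - p + 1) * (l - q + 1) - q * p)"
    unfolding quotient_poly_def by (simp add: algebra_simps)
  moreover have "n * n * n \<ge> 0" using assms by simp
  ultimately show ?thesis
    using neg pos1 pos2 unfolding l_def by (simp add: algebra_simps)
qed

lemma largest_eigenvalue_join_clique_K1_lt:
  fixes t n :: nat
  assumes "t \<ge> 1" "n \<ge> 2 * t + 2"
  shows "largest_eigenvalue (dist_matrix (clique_join (2 * t - 1) (n - 2 * t) (complete_graph 1)))
           < real n + 2"
proof -
  define P Q where "P = 2 * t - 1" and "Q = n - 2 * t"
  have N: "P + Q + 1 = n" and "Q \<ge> 2" using assms unfolding P_def Q_def by auto
  have "\<And>i j. \<not> gadj (complete_graph 1) i j" "gverts (complete_graph 1) = 1" "P \<ge> 1"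
    using assms by (auto simp: gadj_def gverts_def complete_graph_def P_def)
  then have D: "dist_matrix (clique_join P Q (complete_graph 1)) = part_matrix P Q n"
    using dist_matrix_clique_join[of "complete_graph 1" P Q] N by simp
  define x where "x k = (if k = 2 then 2 * real n - 2 * real t else real n + 2)" for k :: nat
  define w where "w = vec n (\<lambda>j. x (part P Q j))"
  \<comment> \<open>\<open>largest_eigenvalue\<close> is a \<open>Max\<close>, so some eigenvalue is needed to make it one.\<close>
  have "eigenvalue (part_matrix P Q n) (largest_eigenvalue (part_matrix P Q n))"
    using part_matrix_eigenvalue_minus_1[of Q P n] \<open>Q \<ge> 2\<close> N
    by (intro eigenvalue_largest_eigenvalue[OF part_matrix_carrier]) auto
  then have "largest_eigenvalue (part_matrix P Q n) < real n + 2"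
  proof (rule eigenvalue_lt_of_mult_vec_lt[OF part_matrix_carrier, rotated -1])
    show "\<And>i. i < n \<Longrightarrow> 0 < w $ i" using assms by (simp add: w_def x_def)
    fix i assume i: "i < n"
    have P: "real P = 2 * real t - 1" and Q: "real Q = real n - 2 * real t" and R: "n - P - Q = 1"
      using assms N unfolding P_def Q_def by (auto simp: of_nat_diff)
    have "(part_matrix P Q n *\<^sub>v w) $ i =
        real P * part_dist (part P Q i) 0 * x 0 + real Q * part_dist (part P Q i) 1 * x 1
          + part_dist (part P Q i) 2 * x 2 - part_dist (part P Q i) (part P Q i) * x (part P Q i)"
      using part_matrix_mult_vec[of P Q n i x] N i R by (simp add: w_def)
    then show "(part_matrix P Q n *\<^sub>v w) $ i < (real n + 2) * w $ i"
      using part_cases[of P Q i] i assms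
      by (auto simp: w_def x_def P Q part_dist_def algebra_simps)
  qed (auto simp: w_def part_matrix_def part_dist_nonneg)
  then show ?thesis using D by (simp add: P_def Q_def)
qed

text \<open>\<open>bound_poly u t c\<close> is \<open>quotient_poly (tc - 1) (n + 2 - (t + 1)c) (c - 1) (n + 2)\<close>
  written in the variable \<open>u = n - tc\<close>; it is quadratic in \<open>u\<close>.\<close>

definition bound_poly :: "real \<Rightarrow> real \<Rightarrow> real \<Rightarrow> real" where
  "bound_poly u t c = 3*u^2*c - 6*u^2 + 2*u*t*c^2 - 8*u*t*c - 2*u*c^2 + 19*u*c - 38*u
     - 3*t^2*c^2 - t*c^3 + 6*t*c^2 - 26*t*c - 7*c^2 + 30*c - 59"

text \<open>The last hypothesis says that \<open>\<partial>bound_poly/\<partial>u \<ge> 0\<close> at \<open>U\<close>; since the polynomial is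
  convex in \<open>u\<close>, nonnegativity at \<open>U\<close> propagates to all \<open>u \<ge> U\<close>.\<close>

lemma bound_poly_nonneg_of_le:
  assumes "bound_poly U t c \<ge> 0" and "U \<le> u" and "c \<ge> 2"
    and "6*(c-2)*U + (2*t*c^2 - 8*t*c - 2*c^2 + 19*c - 38) \<ge> 0"
  shows "bound_poly u t c \<ge> 0"
proof -
  have "3*(c-2)*(u-U) \<ge> 0" using assms(2,3) by simp
  then have "3*(c-2)*(u+U) + (2*t*c^2 - 8*t*c - 2*c^2 + 19*c - 38) \<ge> 0"
    using assms(4) by (simp add: algebra_simps)
  then have "(u-U) * (3*(c-2)*(u+U) + (2*t*c^2 - 8*t*c - 2*c^2 + 19*c - 38)) \<ge> 0"
    using assms(2) by simp
  moreover have "bound_poly u t c =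
      bound_poly U t c + (u-U) * (3*(c-2)*(u+U) + (2*t*c^2 - 8*t*c - 2*c^2 + 19*c - 38))"
    unfolding bound_poly_def by (simp add: algebra_simps power2_eq_square)
  ultimately show ?thesis using assms(1) by linarith
qed

text \<open>In both cases, after substituting \<open>t = s + 1\<close> and \<open>c\<close> as below, all coefficients
  become nonnegative.\<close>

lemma bound_poly_nonneg_large_c:
  fixes t c u :: real
  assumes "t \<ge> 1" "c \<ge> 4*t + 2" "u \<ge> c - 1"
  shows "bound_poly u t c \<ge> 0"
proof (rule bound_poly_nonneg_of_le[where U = "c - 1"])
  define s d where "s = t - 1" and "d = c - 4*t - 2"
  have "s \<ge> 0" "d \<ge> 0" using assms unfolding s_def d_def by auto
  have t: "t = s + 1" and c: "c = 4*s + 6 + d" unfolding s_def d_def by auto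
  have "bound_poly (c - 1) t c = 16*s^4 + 24*s^3*d + 112*s^3 + 9*s^2*d^2 + 124*s^2*d + 268*s^2
      + s*d^3 + 32*s*d^2 + 218*s*d + 252*s + 2*d^3 + 31*d^2 + 126*d + 45"
    unfolding bound_poly_def t c by (simp add: algebra_simps power2_eq_square power3_eq_cube power4_eq_xxxx)
  then show "bound_poly (c - 1) t c \<ge> 0"
    using \<open>s \<ge> 0\<close> \<open>d \<ge> 0\<close> by simp
  have "6*(c-2)*(c-1) + (2*t*c^2 - 8*t*c - 2*c^2 + 19*c - 38) = 32*s^3 + 16*s^2*d + 160*s^2
      + 2*s*d^2 + 64*s*d + 284*s + 6*d^2 + 65*d + 148"
    unfolding t c by (simp add: algebra_simps power2_eq_square power3_eq_cube)
  then show "6*(c-2)*(c-1) + (2*t*c^2 - 8*t*c - 2*c^2 + 19*c - 38) \<ge> 0"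
    using \<open>s \<ge> 0\<close> \<open>d \<ge> 0\<close> by (metis zero_le_power add_nonneg_nonneg mult_nonneg_nonneg
      zero_le_numeral)
qed (use assms in auto)

lemma bound_poly_nonneg_small_c:
  fixes t c u :: real
  assumes "t \<ge> 1" "c \<ge> 3" "c \<le> 4*t + 1" "u + t*c \<ge> 4*t^2 + 10*t"
  shows "bound_poly u t c \<ge> 0"
proof (rule bound_poly_nonneg_of_le[where U = "4*t^2 + 10*t - t*c"])
  define s e w where "s = t - 1" and "e = c - 3" and "w = 4*s + 2 - e"
  have "s \<ge> 0" "e \<ge> 0" "w \<ge> 0" using assms unfolding s_def e_def w_def by auto
  have t: "t = s + 1" and c: "c = e + 3" and w: "w = 4*s + 2 - e" unfolding s_def e_def w_def by auto
  have "bound_poly (4*t^2 + 10*t - t*c) t c =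
      e * ((32*s^3 + 217*s^2 + 393*s + 210) + (8*s^3 + 60*s^2 + 124*s + 79)*w + (s^2 + 3*s + 2)*w^2)
      + (48*s^4 + 336*s^3 + 802*s^2 + 744*s + 198)"
    unfolding bound_poly_def t c w by (simp add: algebra_simps power2_eq_square power3_eq_cube power4_eq_xxxx)
  then show "bound_poly (4*t^2 + 10*t - t*c) t c \<ge> 0"
    using \<open>s \<ge> 0\<close> \<open>e \<ge> 0\<close> \<open>w \<ge> 0\<close> by simp
  have "6*(c-2)*(4*t^2 + 10*t - t*c) + (2*t*c^2 - 8*t*c - 2*c^2 + 19*c - 38) =
      e*(8*s^2 + 56*s + 59 + w*(4*s + 6)) + (24*s^2 + 84*s + 61)"
    unfolding t c w by (simp add: algebra_simps power2_eq_square power3_eq_cube)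
  then show "6*(c-2)*(4*t^2 + 10*t - t*c) + (2*t*c^2 - 8*t*c - 2*c^2 + 19*c - 38) \<ge> 0"
    using \<open>s \<ge> 0\<close> \<open>e \<ge> 0\<close> \<open>w \<ge> 0\<close> by (metis zero_le_power add_nonneg_nonneg
      mult_nonneg_nonneg zero_le_numeral)
qed (use assms in auto)

lemma bound_poly_nonneg:
  fixes t c :: nat and u :: real
  assumes "t \<ge> 1" "c \<ge> 3" "u \<ge> real c - 1" "u + real t * real c \<ge> 4 * real t ^ 2 + 10 * real t"
  shows "bound_poly u (real t) (real c) \<ge> 0"
proof (cases "c \<ge> 4*t + 2")
  case True
  then show ?thesis using assms by (intro bound_poly_nonneg_large_c) auto
next
  case False
  then show ?thesis using assms by (intro bound_poly_nonneg_small_c) auto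
qed

lemma largest_eigenvalue_join_clique_isolated_ge:
  fixes t n c :: nat
  assumes "t \<ge> 1" "n \<ge> 4 * t^2 + 10 * t" "c \<ge> 3" "n \<ge> (t + 1) * c - 1"
  shows "real n + 2 \<le> largest_eigenvalue
           (dist_matrix (clique_join (t * c - 1) (n + 2 - (t + 1) * c) (empty_graph (c - 1))))"
proof -
  define P Q R where "P = t * c - 1" and "Q = n + 2 - (t + 1) * c" and "R = c - 1"
  have tc: "t * c \<ge> 3" using mult_mono[OF assms(1,3)] by simp
  have N: "P + Q + R = n" using assms tc unfolding P_def Q_def R_def by (simp add: algebra_simps)
  have "\<And>i j. \<not> gadj (empty_graph R) i j" "gverts (empty_graph R) = R" "P \<ge> 1"
    using tc by (simp_all add: gadj_def gverts_def empty_graph_def P_def)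
  then have D: "dist_matrix (clique_join P Q (empty_graph R)) = part_matrix P Q n"
    using dist_matrix_clique_join[of "empty_graph R" P Q] N by simp
  have P: "real P = real t * real c - 1" and Q: "real Q = real n + 2 - (real t + 1) * real c"
    and R: "real R = real c - 1"
    using assms tc unfolding P_def Q_def R_def by (simp_all add: of_nat_diff algebra_simps)
  have "quotient_poly (real P) (real Q) (real R) (real n + 2) =
      bound_poly (real n - real t * real c) (real t) (real c)"
    unfolding quotient_poly_def bound_poly_def P Q R
    by (simp add: algebra_simps power2_eq_square power3_eq_cube)
  also have "\<dots> \<ge> 0"
  proof (rule bound_poly_nonneg)
    have "real ((t + 1) * c) \<le> real n + 1" using assms(4) by linarith
    then show "real n - real t * real c \<ge> real c - 1" by (simp add: algebra_simps)
    have "real (4 * t^2 + 10 * t) \<le> real n" using assms(2) by (simp only: of_nat_le_iff)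
    then show "real n - real t * real c + real t * real c \<ge> 4 * real t ^ 2 + 10 * real t" by simp
  qed (use assms in auto)
  finally have "quotient_poly (real P) (real Q) (real R) (real n + 2) \<ge> 0" .
  moreover have "n \<ge> 1" using assms(1,2) by (simp add: le_add2 order.trans)
  then have "quotient_poly (real P) (real Q) (real R) (10 * real n) \<le> 0"
    using N by (intro quotient_poly_10n_nonpos) (simp_all flip: of_nat_add)
  ultimately have "real n + 2 \<le> largest_eigenvalue (part_matrix P Q (P + Q + R))"
    using \<open>P \<ge> 1\<close> \<open>n \<ge> 1\<close> assms(3) unfolding R_def
    by (intro le_largest_eigenvalue_part_matrix) auto
  then have "real n + 2 \<le> largest_eigenvalue (dist_matrix (clique_join P Q (empty_graph R)))"
    unfolding N D .
  then show ?thesis unfolding P_def Q_def R_def .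
qed

theorem mainTheorem6:
  fixes t n c :: nat
  assumes "t \<ge> 1"
    and "n \<ge> 4 * t^2 + 10 * t"
    and "c \<ge> 3"
    and "n \<ge> (t + 1) * c - 1"
  shows "largest_eigenvalue (dist_matrix
            (graph_join (complete_graph (2 * t - 1))
                        (graph_union (complete_graph (n - 2 * t)) (complete_graph 1))))
           < real n + 2
       \<and> real n + 2 \<le> largest_eigenvalue (dist_matrix
            (graph_join (complete_graph (t * c - 1))
                        (graph_union (complete_graph (n + 2 - (t + 1) * c)) (empty_graph (c - 1)))))"
proof
  have "t \<le> t^2" using assms(1) by (simp add: power2_eq_square)
  then have "n \<ge> 2 * t + 2" using assms(1,2) by linarith
  then show "largest_eigenvalue (dist_matrix (clique_join (2 * t - 1) (n - 2 * t) (complete_graph 1)))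
           < real n + 2"
    using assms(1) by (rule largest_eigenvalue_join_clique_K1_lt[rotated])
  show "real n + 2 \<le> largest_eigenvalue
           (dist_matrix (clique_join (t * c - 1) (n + 2 - (t + 1) * c) (empty_graph (c - 1))))"
    using assms by (rule largest_eigenvalue_join_clique_isolated_ge)
qed

end
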